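(* Let $W$ be a finite group acting on an affine variety $X$ and let $X/W=\operatorname{Spec}\mathcal{O}(X)^W$. Then $\mathcal{D}(X,X/W)=\mathcal{D}(X)^W$ and $\overline{\mathcal{D}}(X,X/W)=\overline{\mathcal{D}}(X)^W$.
   Context: Varieties are over $\mathbb{C}$ and irreducible. $\mathcal{D}(X)$ is the algebra of ($\mathbb{C}$-linear, Grothendieck) differential operators on $\mathcal{O}(X)$, filtered by order, with associated graded algebra $\overline{\mathcal{D}}(X)$; $W$ acts on both by conjugation. $\mathcal{D}(X,X/W)=\{D\in\mathcal{D}(X): D(\mathcal{O}(X)^W)\subseteq\mathcal{O}(X)^W\}$ with induced filtration $\mathcal{D}(X,X/W)\cap\mathcal{D}(X)_{\le d}$ and associated graded algebra $\overline{\mathcal{D}}(X,X/W)\subseteq\overline{\mathcal{D}}(X)$. *)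

theory Defs
  imports "HOL-Analysis.Analysis" "HOL-Algebra.Group"
begin

inductive_set polyfun :: "(complex^'n \<Rightarrow> complex) set" where
  pf_const: "(\<lambda>x. c) \<in> polyfun"
| pf_coord: "(\<lambda>x. x $ i) \<in> polyfun"
| pf_add: "p \<in> polyfun \<Longrightarrow> q \<in> polyfun \<Longrightarrow> (\<lambda>x. p x + q x) \<in> polyfun"
| pf_mult: "p \<in> polyfun \<Longrightarrow> q \<in> polyfun \<Longrightarrow> (\<lambda>x. p x * q x) \<in> polyfun"

definition zariski_closed :: "(complex^'n) set \<Rightarrow> bool" where
  "zariski_closed Z \<longleftrightarrow> (\<exists>S \<subseteq> polyfun. Z = {x. \<forall>p\<in>S. p x = 0})"

definition affine_variety :: "(complex^'n) set \<Rightarrow> bool" where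
  "affine_variety X \<longleftrightarrow> zariski_closed X \<and> X \<noteq> {} \<and>
     (\<forall>Z1 Z2. zariski_closed Z1 \<longrightarrow> zariski_closed Z2 \<longrightarrow> X = (Z1 \<inter> X) \<union> (Z2 \<inter> X)
        \<longrightarrow> X \<subseteq> Z1 \<or> X \<subseteq> Z2)"

text \<open>Regular functions O(X), represented as functions vanishing outside X.\<close>
definition regfun :: "(complex^'n) set \<Rightarrow> (complex^'n \<Rightarrow> complex) set" where
  "regfun X = {f. \<exists>p\<in>polyfun. \<forall>x. f x = (if x \<in> X then p x else 0)}"

definition morphism :: "(complex^'n) set \<Rightarrow> (complex^'n \<Rightarrow> complex^'n) \<Rightarrow> bool" where
  "morphism X \<phi> \<longleftrightarrow> (\<forall>x\<in>X. \<phi> x \<in> X) \<and>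
     (\<forall>i. \<exists>p\<in>polyfun. \<forall>x\<in>X. \<phi> x $ i = p x)"

definition group_action_on_variety ::
  "('g, 'b) monoid_scheme \<Rightarrow> (complex^'n) set \<Rightarrow> ('g \<Rightarrow> complex^'n \<Rightarrow> complex^'n) \<Rightarrow> bool" where
  "group_action_on_variety G X act \<longleftrightarrow> group G \<and>
     (\<forall>g\<in>carrier G. morphism X (act g)) \<and>
     (\<forall>x\<in>X. act \<one>\<^bsub>G\<^esub> x = x) \<and>
     (\<forall>g\<in>carrier G. \<forall>h\<in>carrier G. \<forall>x\<in>X. act (g \<otimes>\<^bsub>G\<^esub> h) x = act g (act h x))"

definition fun_act ::
  "('g, 'b) monoid_scheme \<Rightarrow> (complex^'n) set \<Rightarrow> ('g \<Rightarrow> complex^'n \<Rightarrow> complex^'n) \<Rightarrow> 'g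
     \<Rightarrow> (complex^'n \<Rightarrow> complex) \<Rightarrow> (complex^'n \<Rightarrow> complex)" where
  "fun_act G X act g f = (\<lambda>x. if x \<in> X then f (act (inv\<^bsub>G\<^esub> g) x) else 0)"

definition invariants ::
  "('g, 'b) monoid_scheme \<Rightarrow> (complex^'n) set \<Rightarrow> ('g \<Rightarrow> complex^'n \<Rightarrow> complex^'n)
     \<Rightarrow> (complex^'n \<Rightarrow> complex) set" where
  "invariants G X act = {f \<in> regfun X. \<forall>g\<in>carrier G. fun_act G X act g f = f}"

type_synonym 'n op = "(complex^'n \<Rightarrow> complex) \<Rightarrow> (complex^'n \<Rightarrow> complex)"

definition clinear_on :: "(complex^'n) set \<Rightarrow> 'n op \<Rightarrow> bool" where
  "clinear_on X D \<longleftrightarrow> (\<forall>f\<in>regfun X. D f \<in> regfun X) \<and>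
     (\<forall>f\<in>regfun X. \<forall>g\<in>regfun X. \<forall>c::complex.
        D (\<lambda>x. c * f x + g x) = (\<lambda>x. c * D f x + D g x))"

fun diffop :: "(complex^'n) set \<Rightarrow> nat \<Rightarrow> 'n op \<Rightarrow> bool" where
  "diffop X 0 D \<longleftrightarrow> clinear_on X D \<and>
     (\<forall>a\<in>regfun X. \<forall>f\<in>regfun X. D (\<lambda>x. a x * f x) = (\<lambda>x. a x * D f x))"
| "diffop X (Suc d) D \<longleftrightarrow> clinear_on X D \<and>
     (\<forall>a\<in>regfun X. diffop X d (\<lambda>f. (\<lambda>x. D (\<lambda>y. a y * f y) x - a x * D f x)))"

text \<open>Order at most d-1 (with D_{<=-1} = 0, as operators on O(X)).\<close>
definition diffop_below :: "(complex^'n) set \<Rightarrow> nat \<Rightarrow> 'n op \<Rightarrow> bool" where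
  "diffop_below X d D \<longleftrightarrow>
     (if d = 0 then clinear_on X D \<and> (\<forall>f\<in>regfun X. D f = (\<lambda>x. 0)) else diffop X (d - 1) D)"

definition diffops :: "(complex^'n) set \<Rightarrow> 'n op set" where
  "diffops X = {D. \<exists>d. diffop X d D}"

definition op_diff :: "'n op \<Rightarrow> 'n op \<Rightarrow> 'n op" where
  "op_diff D E = (\<lambda>f x. D f x - E f x)"

definition op_act ::
  "('g, 'b) monoid_scheme \<Rightarrow> (complex^'n) set \<Rightarrow> ('g \<Rightarrow> complex^'n \<Rightarrow> complex^'n) \<Rightarrow> 'g
     \<Rightarrow> 'n op \<Rightarrow> 'n op" where
  "op_act G X act g D = (\<lambda>f. fun_act G X act g (D (fun_act G X act (inv\<^bsub>G\<^esub> g) f)))"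

text \<open>D(X,X/W): operators preserving the invariant ring.\<close>
definition preserves_invariants ::
  "('g, 'b) monoid_scheme \<Rightarrow> (complex^'n) set \<Rightarrow> ('g \<Rightarrow> complex^'n \<Rightarrow> complex^'n) \<Rightarrow> 'n op \<Rightarrow> bool" where
  "preserves_invariants G X act D \<longleftrightarrow> (\<forall>f\<in>invariants G X act. D f \<in> invariants G X act)"

definition invariant_op ::
  "('g, 'b) monoid_scheme \<Rightarrow> (complex^'n) set \<Rightarrow> ('g \<Rightarrow> complex^'n \<Rightarrow> complex^'n) \<Rightarrow> 'n op \<Rightarrow> bool" where
  "invariant_op G X act D \<longleftrightarrow> (\<forall>g\<in>carrier G. \<forall>f\<in>regfun X. op_act G X act g D f = D f)"

end

theory Submission
  imports Defs
begin

text \<open>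
  If D preserves O(X)^W, then for every g in W the operator P = g.D - D, a differential
  operator of some order d, kills O(X)^W; the point is that such a P vanishes.  Let x be a point
  whose stabiliser acts trivially on X and choose w in O(X) with w(x) = 1 that vanishes to order
  d + 1 at the other points of the orbit of x.  For f in O(X) the sum of the translates of w f is
  invariant, hence killed by P, and at x only the translates by the stabiliser survive; so
  P(w f) vanishes at x, and then so does P f = P((1 - w)^(d+1) f) + P(w f h) for some h.  Such
  points are dense in the irreducible variety X, since each element acting non-trivially fixes
  a proper closed subset.  For the graded statement, an operator whose symbol is W-invariant
  differs by lower order terms from its average over W, which is W-invariant.
\<close>

section \<open>Polynomial and regular functions\<close>

lemma polyfun_scale: "p \<in> polyfun \<Longrightarrow> (\<lambda>x. c * p x) \<in> polyfun"
  by (rule pf_mult[OF pf_const])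

lemma polyfun_diff: "p \<in> polyfun \<Longrightarrow> q \<in> polyfun \<Longrightarrow> (\<lambda>x. p x - q x) \<in> polyfun"
  using pf_add[OF _ polyfun_scale[of q "-1"], of p] by simp

lemma polyfun_power: "p \<in> polyfun \<Longrightarrow> (\<lambda>x. p x ^ k) \<in> polyfun"
proof (induction k)
  case 0
  then show ?case using pf_const[of 1] by simp
next
  case (Suc k)
  then show ?case using pf_mult[of p "\<lambda>x. p x ^ k"] by simp
qed

lemma polyfun_prod: "finite I \<Longrightarrow> (\<And>i. i \<in> I \<Longrightarrow> p i \<in> polyfun) \<Longrightarrow> (\<lambda>x. \<Prod>i\<in>I. p i x) \<in> polyfun"
proof (induction I rule: finite_induct)
  case empty
  then show ?case using pf_const[of 1] by simp
next
  case (insert i I)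
  then show ?case using pf_mult[of "p i" "\<lambda>x. \<Prod>i\<in>I. p i x"] by simp
qed

lemma polyfun_separates_points:
  assumes "(x::complex^'n) \<noteq> y"
  shows "\<exists>l\<in>polyfun. l x = 1 \<and> l y = 0"
proof -
  obtain i where i: "x $ i \<noteq> y $ i"
    using assms by (auto simp: vec_eq_iff)
  define l where "l = (\<lambda>z::complex^'n. (1 / (x $ i - y $ i)) * (z $ i - y $ i))"
  have "l \<in> polyfun"
    unfolding l_def by (intro polyfun_scale polyfun_diff pf_coord pf_const)
  moreover have "l x = 1" "l y = 0"
    using i by (simp_all add: l_def)
  ultimately show ?thesis
    by blast
qed

lemma polyfun_comp_morphism:
  assumes \<phi>: "morphism X \<phi>" and p: "p \<in> polyfun"
  shows "\<exists>q\<in>polyfun. \<forall>x\<in>X. p (\<phi> x) = q x"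
  using p
proof (induction rule: polyfun.induct)
  case (pf_const c)
  show ?case by (rule bexI[of _ "\<lambda>x. c"]) (simp_all add: polyfun.pf_const)
next
  case (pf_coord i)
  show ?case using \<phi> unfolding morphism_def by blast
next
  case (pf_add p q)
  then obtain p' q' where "p' \<in> polyfun" "q' \<in> polyfun"
    and "\<forall>x\<in>X. p (\<phi> x) = p' x" "\<forall>x\<in>X. q (\<phi> x) = q' x"
    by blast
  then show ?case using polyfun.pf_add[of p' q'] by auto
next
  case (pf_mult p q)
  then obtain p' q' where "p' \<in> polyfun" "q' \<in> polyfun"
    and "\<forall>x\<in>X. p (\<phi> x) = p' x" "\<forall>x\<in>X. q (\<phi> x) = q' x"
    by blast
  then show ?case using polyfun.pf_mult[of p' q'] by auto
qed

definition zero_outside :: "(complex^'n) set \<Rightarrow> (complex^'n \<Rightarrow> complex) \<Rightarrow> complex^'n \<Rightarrow> complex" where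
  "zero_outside X p = (\<lambda>x. if x \<in> X then p x else 0)"

lemma regfun_iff: "f \<in> regfun X \<longleftrightarrow> (\<exists>p\<in>polyfun. f = zero_outside X p)"
  unfolding regfun_def zero_outside_def fun_eq_iff by auto

lemma zero_outside_in_regfun: "p \<in> polyfun \<Longrightarrow> zero_outside X p \<in> regfun X"
  using regfun_iff by blast

lemma regfun_vanishes_outside: "f \<in> regfun X \<Longrightarrow> x \<notin> X \<Longrightarrow> f x = 0"
  unfolding regfun_def by auto

lemma zero_outside_power_mult:
  "zero_outside X (\<lambda>z. p z ^ k * q z) = (\<lambda>z. zero_outside X p z ^ k * zero_outside X q z)"
  unfolding zero_outside_def by auto

lemma regfun_zero: "(\<lambda>x. 0) \<in> regfun X"
  using zero_outside_in_regfun[OF pf_const[of 0], of X] by (simp add: zero_outside_def)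

lemma regfun_mult: "f \<in> regfun X \<Longrightarrow> g \<in> regfun X \<Longrightarrow> (\<lambda>x. f x * g x) \<in> regfun X"
proof -
  assume "f \<in> regfun X" "g \<in> regfun X"
  then obtain p q where pq: "p \<in> polyfun" "q \<in> polyfun"
    and "f = zero_outside X p" "g = zero_outside X q"
    by (auto simp: regfun_iff)
  then have "(\<lambda>x. f x * g x) = zero_outside X (\<lambda>x. p x * q x)"
    by (auto simp: zero_outside_def)
  then show ?thesis
    using zero_outside_in_regfun[OF pf_mult[OF pq]] by simp
qed

lemma regfun_lin: "f \<in> regfun X \<Longrightarrow> g \<in> regfun X \<Longrightarrow> (\<lambda>x. c * f x + g x) \<in> regfun X"
proof -
  assume "f \<in> regfun X" "g \<in> regfun X"
  then obtain p q where pq: "p \<in> polyfun" "q \<in> polyfun"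
    and "f = zero_outside X p" "g = zero_outside X q"
    by (auto simp: regfun_iff)
  then have "(\<lambda>x. c * f x + g x) = zero_outside X (\<lambda>x. c * p x + q x)"
    by (auto simp: zero_outside_def)
  then show ?thesis
    using zero_outside_in_regfun[OF pf_add[OF polyfun_scale[OF pq(1)] pq(2)]] by simp
qed

lemma regfun_add: "f \<in> regfun X \<Longrightarrow> g \<in> regfun X \<Longrightarrow> (\<lambda>x. f x + g x) \<in> regfun X"
  using regfun_lin[of f X g 1] by simp

lemma regfun_diff: "f \<in> regfun X \<Longrightarrow> g \<in> regfun X \<Longrightarrow> (\<lambda>x. f x - g x) \<in> regfun X"
  using regfun_lin[of g X f "-1"] by simp

lemma regfun_sum: "finite I \<Longrightarrow> (\<And>i. i \<in> I \<Longrightarrow> u i \<in> regfun X) \<Longrightarrow> (\<lambda>x. \<Sum>i\<in>I. u i x) \<in> regfun X"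
proof (induction I rule: finite_induct)
  case empty
  then show ?case using regfun_zero by simp
next
  case (insert i I)
  then show ?case using regfun_add[of "u i" X "\<lambda>x. \<Sum>i\<in>I. u i x"] by simp
qed

lemma regfun_power_mult: "a \<in> regfun X \<Longrightarrow> h \<in> regfun X \<Longrightarrow> (\<lambda>z. a z ^ k * h z) \<in> regfun X"
proof (induction k)
  case 0
  then show ?case by simp
next
  case (Suc k)
  then show ?case using regfun_mult[of a X "\<lambda>z. a z ^ k * h z"] by (simp add: mult.assoc)
qed

lemma regfun_bump:
  assumes x: "x \<in> X" and Y: "finite Y" "Y \<subseteq> X" "x \<notin> Y"
  shows "\<exists>w\<in>regfun X. w x = 1 \<and>
    (\<forall>y\<in>Y. \<exists>a\<in>regfun X. \<exists>b\<in>regfun X. a y = 0 \<and> w = (\<lambda>z. a z ^ k * b z))"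
proof -
  have "\<exists>l\<in>polyfun. l x = 1 \<and> l y = 0" if "y \<in> Y" for y
    using polyfun_separates_points[of x y] that Y(3) by auto
  then have "\<forall>y\<in>Y. \<exists>l. l \<in> polyfun \<and> l x = 1 \<and> l y = 0"
    by blast
  from bchoice[OF this] obtain L where L: "\<And>y. y \<in> Y \<Longrightarrow> L y \<in> polyfun \<and> L y x = 1 \<and> L y y = 0"
    by blast
  define w where "w = zero_outside X (\<lambda>z. \<Prod>y\<in>Y. L y z ^ k)"
  have "w \<in> regfun X"
    unfolding w_def using L Y(1) by (simp add: zero_outside_in_regfun polyfun_prod polyfun_power)
  moreover have "w x = 1"
    unfolding w_def zero_outside_def using x L by simp
  moreover have "\<exists>a\<in>regfun X. \<exists>b\<in>regfun X. a y = 0 \<and> w = (\<lambda>z. a z ^ k * b z)" if y: "y \<in> Y" for y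
  proof (intro bexI conjI)
    show "w = (\<lambda>z. zero_outside X (L y) z ^ k * zero_outside X (\<lambda>z. \<Prod>y'\<in>Y - {y}. L y' z ^ k) z)"
      unfolding w_def zero_outside_power_mult[symmetric] prod.remove[OF Y(1) y] ..
    show "zero_outside X (L y) y = 0"
      using y Y(2) L unfolding zero_outside_def by auto
    show "zero_outside X (L y) \<in> regfun X"
      using y L zero_outside_in_regfun by blast
    show "zero_outside X (\<lambda>z. \<Prod>y'\<in>Y - {y}. L y' z ^ k) \<in> regfun X"
      by (rule zero_outside_in_regfun, rule polyfun_prod) (use L Y(1) polyfun_power in auto)
  qed
  ultimately show ?thesis by blast
qed

section \<open>Zariski closed sets\<close>

lemma zariski_closed_zero_set: "p \<in> polyfun \<Longrightarrow> zariski_closed {x. p x = 0}"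
  unfolding zariski_closed_def by (rule exI[of _ "{p}"]) auto

lemma zariski_closed_empty: "zariski_closed ({}::(complex^'n) set)"
  using zariski_closed_zero_set[OF pf_const[of 1]] by simp

lemma zariski_closed_Un:
  assumes "zariski_closed A" "zariski_closed B"
  shows "zariski_closed (A \<union> B)"
proof -
  obtain S T where ST: "S \<subseteq> polyfun" "T \<subseteq> polyfun"
    and A: "A = {x. \<forall>p\<in>S. p x = 0}" and B: "B = {x. \<forall>p\<in>T. p x = 0}"
    using assms unfolding zariski_closed_def by blast
  define ST where "ST = {(\<lambda>z. s z * t z) | s t. s \<in> S \<and> t \<in> T}"
  have "ST \<subseteq> polyfun"
    unfolding ST_def using ST pf_mult by blast
  moreover have "A \<union> B = {x. \<forall>p\<in>ST. p x = 0}"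
  proof (intro equalityI subsetI)
    fix x assume "x \<in> A \<union> B"
    then show "x \<in> {x. \<forall>p\<in>ST. p x = 0}"
      unfolding ST_def A B by auto
  next
    fix x assume x: "x \<in> {x. \<forall>p\<in>ST. p x = 0}"
    show "x \<in> A \<union> B"
    proof (rule ccontr)
      assume "x \<notin> A \<union> B"
      then obtain s t where st: "s \<in> S" "t \<in> T" "s x \<noteq> 0" "t x \<noteq> 0"
        unfolding A B by auto
      then have "(\<lambda>z. s z * t z) \<in> ST"
        unfolding ST_def by blast
      moreover from x have "\<forall>p\<in>ST. p x = 0"
        by simp
      ultimately have "s x * t x = 0"
        by (metis (no_types) bspec)
      then show False
        using st by simp
    qed
  qed
  ultimately show ?thesis
    unfolding zariski_closed_def by blast
qed

lemma zariski_closed_Union: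
  "finite \<Z> \<Longrightarrow> (\<And>Z. Z \<in> \<Z> \<Longrightarrow> zariski_closed Z) \<Longrightarrow> zariski_closed (\<Union>\<Z>)"
  by (induction \<Z> rule: finite_induct) (simp_all add: zariski_closed_empty zariski_closed_Un)

lemma zariski_closed_fixed_points:
  assumes "morphism X \<phi>"
  shows "\<exists>Z. zariski_closed Z \<and> (\<forall>z\<in>X. z \<in> Z \<longleftrightarrow> \<phi> z = z)"
proof -
  have "\<forall>i. \<exists>p. p \<in> polyfun \<and> (\<forall>x\<in>X. \<phi> x $ i = p x)"
    using assms unfolding morphism_def by blast
  then obtain P where P: "\<And>i. P i \<in> polyfun" "\<And>i. \<forall>x\<in>X. \<phi> x $ i = P i x"
    using choice[of "\<lambda>i p. p \<in> polyfun \<and> (\<forall>x\<in>X. \<phi> x $ i = p x)"] by blast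
  define S where "S = range (\<lambda>i z. P i z - z $ i)"
  have "S \<subseteq> polyfun"
    unfolding S_def using P(1) by (auto intro!: polyfun_diff pf_coord)
  then have "zariski_closed {z. \<forall>p\<in>S. p z = 0}"
    unfolding zariski_closed_def by blast
  moreover have "\<forall>z\<in>X. z \<in> {z. \<forall>p\<in>S. p z = 0} \<longleftrightarrow> \<phi> z = z"
    unfolding S_def using P(2) by (auto simp: vec_eq_iff)
  ultimately show ?thesis
    by (intro exI[of _ "{z. \<forall>p\<in>S. p z = 0}"]) simp
qed

lemma affine_variety_subset_Union:
  assumes X: "affine_variety X" and "finite \<Z>" "\<And>Z. Z \<in> \<Z> \<Longrightarrow> zariski_closed Z" "X \<subseteq> \<Union>\<Z>"
  shows "\<exists>Z\<in>\<Z>. X \<subseteq> Z"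
  using assms(2-4)
proof (induction \<Z> rule: finite_induct)
  case empty
  then show ?case using X unfolding affine_variety_def by simp
next
  case (insert Z \<Z>)
  then have "zariski_closed Z" "zariski_closed (\<Union>\<Z>)" "X = (Z \<inter> X) \<union> (\<Union>\<Z> \<inter> X)"
    using zariski_closed_Union[OF insert.hyps(1)] by auto
  then have "X \<subseteq> Z \<or> X \<subseteq> \<Union>\<Z>"
    using X unfolding affine_variety_def by blast
  then show ?case
    using insert by blast
qed

section \<open>Linear and differential operators\<close>

lemma clinear_on_regfun: "clinear_on X D \<Longrightarrow> f \<in> regfun X \<Longrightarrow> D f \<in> regfun X"
  unfolding clinear_on_def by blast

lemma clinear_on_lin:
  "clinear_on X D \<Longrightarrow> f \<in> regfun X \<Longrightarrow> g \<in> regfun X \<Longrightarrow> D (\<lambda>x. c * f x + g x) = (\<lambda>x. c * D f x + D g x)"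
  unfolding clinear_on_def by blast

lemma clinear_on_add:
  "clinear_on X D \<Longrightarrow> f \<in> regfun X \<Longrightarrow> g \<in> regfun X \<Longrightarrow> D (\<lambda>x. f x + g x) = (\<lambda>x. D f x + D g x)"
  using clinear_on_lin[of X D f g 1] by simp

lemma clinear_on_zero: "clinear_on X D \<Longrightarrow> D (\<lambda>x. 0) = (\<lambda>x. 0)"
  using clinear_on_add[OF _ regfun_zero regfun_zero, of X D] by (simp add: fun_eq_iff)

lemma clinear_on_sum:
  assumes D: "clinear_on X D" and "finite I" "\<And>i. i \<in> I \<Longrightarrow> u i \<in> regfun X"
  shows "D (\<lambda>x. \<Sum>i\<in>I. u i x) = (\<lambda>x. \<Sum>i\<in>I. D (u i) x)"
  using assms(2,3)
proof (induction I rule: finite_induct)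
  case empty
  then show ?case using clinear_on_zero[OF D] by simp
next
  case (insert i I)
  have "D (\<lambda>x. \<Sum>j\<in>insert i I. u j x) = D (\<lambda>x. u i x + (\<Sum>j\<in>I. u j x))"
    using insert.hyps by simp
  also have "\<dots> = (\<lambda>x. D (u i) x + D (\<lambda>x. \<Sum>j\<in>I. u j x) x)"
  proof (rule clinear_on_add[OF D])
    show "u i \<in> regfun X" "(\<lambda>x. \<Sum>j\<in>I. u j x) \<in> regfun X"
      using insert.prems regfun_sum[OF insert.hyps(1), of u] by simp_all
  qed
  also have "\<dots> = (\<lambda>x. \<Sum>j\<in>insert i I. D (u j) x)"
    using insert by simp
  finally show ?case .
qed

lemma clinear_on_cong: "(\<And>f. f \<in> regfun X \<Longrightarrow> D f = D' f) \<Longrightarrow> clinear_on X D = clinear_on X D'"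
  unfolding clinear_on_def by (simp add: regfun_lin)

lemma clinear_on_zero_op: "clinear_on X (\<lambda>f x. 0)"
  unfolding clinear_on_def by (simp add: regfun_zero)

lemma clinear_on_scale_add:
  assumes D: "clinear_on X D" and E: "clinear_on X E"
  shows "clinear_on X (\<lambda>f x. c * D f x + E f x)"
  unfolding clinear_on_def
proof (intro conjI ballI allI)
  fix f assume "f \<in> regfun X"
  then show "(\<lambda>x. c * D f x + E f x) \<in> regfun X"
    using D E by (simp add: regfun_lin clinear_on_regfun)
next
  fix f g c' assume f: "f \<in> regfun X" and g: "g \<in> regfun X"
  show "(\<lambda>x. c * D (\<lambda>x. c' * f x + g x) x + E (\<lambda>x. c' * f x + g x) x)
      = (\<lambda>x. c' * (c * D f x + E f x) + (c * D g x + E g x))"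
    unfolding clinear_on_lin[OF D f g] clinear_on_lin[OF E f g] by (simp add: algebra_simps)
qed

lemma op_lincomb_closed:
  fixes Q :: "'n op \<Rightarrow> bool"
  assumes zero: "Q (\<lambda>f x. 0)"
    and scale_add: "\<And>D E c. Q D \<Longrightarrow> Q E \<Longrightarrow> Q (\<lambda>f x. c * D f x + E f x)"
    and "finite I" and "\<And>i. i \<in> I \<Longrightarrow> Q (Dg i)"
  shows "Q (\<lambda>f x. \<Sum>i\<in>I. c i * Dg i f x)"
  using assms(3,4)
proof (induction I rule: finite_induct)
  case empty
  then show ?case using zero by simp
next
  case (insert i I)
  then have "Q (\<lambda>f x. c i * Dg i f x + (\<Sum>j\<in>I. c j * Dg j f x))"
    using scale_add[of "Dg i" "\<lambda>f x. \<Sum>j\<in>I. c j * Dg j f x" "c i"] by simp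
  then show ?case
    using insert.hyps by simp
qed

lemma op_diff_eq_scale_add: "op_diff D E = (\<lambda>f x. (-1) * E f x + D f x)"
  unfolding op_diff_def by simp

lemma diffop_clinear: "diffop X d D \<Longrightarrow> clinear_on X D"
  by (cases d) auto

lemma diffop_cong: "(\<And>f. f \<in> regfun X \<Longrightarrow> D f = D' f) \<Longrightarrow> diffop X d D = diffop X d D'"
proof (induction d arbitrary: D D')
  case 0
  then show ?case
    using clinear_on_cong[of X D D'] by (simp add: regfun_mult)
next
  case (Suc d)
  have "diffop X d (\<lambda>f x. D (\<lambda>y. a y * f y) x - a x * D f x)
      = diffop X d (\<lambda>f x. D' (\<lambda>y. a y * f y) x - a x * D' f x)" if "a \<in> regfun X" for a
    by (rule Suc.IH) (simp add: Suc.prems regfun_mult that)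
  then show ?case
    using clinear_on_cong[of X D D'] Suc.prems by simp
qed

lemma diffop_zero_op: "diffop X d (\<lambda>f x. 0)"
  by (induction d) (simp_all add: clinear_on_zero_op)

lemma diffop_scale_add:
  "diffop X d D \<Longrightarrow> diffop X d E \<Longrightarrow> diffop X d (\<lambda>f x. c * D f x + E f x)"
proof (induction d arbitrary: D E)
  case 0
  have "clinear_on X (\<lambda>f x. c * D f x + E f x)"
    using 0 by (intro clinear_on_scale_add) simp_all
  moreover have
    "(\<lambda>x. c * D (\<lambda>x. a x * f x) x + E (\<lambda>x. a x * f x) x) = (\<lambda>x. a x * (c * D f x + E f x))"
    if "a \<in> regfun X" "f \<in> regfun X" for a f
    using 0 that by (simp add: algebra_simps)
  ultimately show ?case
    by simp
next
  case (Suc d)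
  have "(\<lambda>f x. (c * D (\<lambda>y. a y * f y) x + E (\<lambda>y. a y * f y) x) - a x * (c * D f x + E f x))
      = (\<lambda>f x. c * (D (\<lambda>y. a y * f y) x - a x * D f x) + (E (\<lambda>y. a y * f y) x - a x * E f x))" for a
    by (simp add: algebra_simps)
  then show ?case
    using Suc by (simp add: clinear_on_scale_add)
qed

lemma diffop_lincomb:
  "finite I \<Longrightarrow> (\<And>i. i \<in> I \<Longrightarrow> diffop X d (Dg i)) \<Longrightarrow> diffop X d (\<lambda>f x. \<Sum>i\<in>I. c i * Dg i f x)"
  by (rule op_lincomb_closed[where Q = "diffop X d", OF diffop_zero_op diffop_scale_add])

lemma diffop_op_diff: "diffop X d D \<Longrightarrow> diffop X d E \<Longrightarrow> diffop X d (op_diff D E)"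
  unfolding op_diff_eq_scale_add by (rule diffop_scale_add)

lemma diffop_below_cong:
  "(\<And>f. f \<in> regfun X \<Longrightarrow> D f = D' f) \<Longrightarrow> diffop_below X d D = diffop_below X d D'"
  unfolding diffop_below_def using clinear_on_cong[of X D D'] diffop_cong[of X D D'] by auto

lemma diffop_below_zero_op: "diffop_below X d (\<lambda>f x. 0)"
  unfolding diffop_below_def by (simp add: clinear_on_zero_op diffop_zero_op)

lemma diffop_below_scale_add:
  "diffop_below X d D \<Longrightarrow> diffop_below X d E \<Longrightarrow> diffop_below X d (\<lambda>f x. c * D f x + E f x)"
  unfolding diffop_below_def by (simp add: clinear_on_scale_add diffop_scale_add split: if_splits)

lemma diffop_below_lincomb:
  "finite I \<Longrightarrow> (\<And>i. i \<in> I \<Longrightarrow> diffop_below X d (Dg i))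
    \<Longrightarrow> diffop_below X d (\<lambda>f x. \<Sum>i\<in>I. c i * Dg i f x)"
  by (rule op_lincomb_closed[where Q = "diffop_below X d",
        OF diffop_below_zero_op diffop_below_scale_add])

lemma diffop_below_op_diff:
  "diffop_below X d D \<Longrightarrow> diffop_below X d E \<Longrightarrow> diffop_below X d (op_diff D E)"
  unfolding op_diff_eq_scale_add by (rule diffop_below_scale_add)

lemma diffop_kills_power_at_zero:
  "diffop X d P \<Longrightarrow> a \<in> regfun X \<Longrightarrow> a x = 0 \<Longrightarrow> h \<in> regfun X \<Longrightarrow> P (\<lambda>z. a z ^ Suc d * h z) x = 0"
proof (induction d arbitrary: P h)
  case 0
  then have "P (\<lambda>z. a z * h z) = (\<lambda>z. a z * P h z)"
    by simp
  then show ?case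
    using 0 by simp
next
  case (Suc d)
  let ?h' = "\<lambda>z. a z ^ Suc d * h z"
  have "diffop X d (\<lambda>f x. P (\<lambda>y. a y * f y) x - a x * P f x)"
    using Suc.prems(1,2) by simp
  then have "P (\<lambda>y. a y * ?h' y) x - a x * P ?h' x = 0"
    using Suc.IH[of _ h] Suc.prems(2-4) by blast
  then show ?case
    using Suc.prems(3) by (simp add: mult.assoc)
qed

lemma diffop_vanishes_at_if_kills_multiples:
  assumes P: "diffop X d P" and x: "x \<in> X" and w: "w \<in> regfun X" "w x = 1"
    and kills: "\<And>h. h \<in> regfun X \<Longrightarrow> P (\<lambda>z. w z * h z) x = 0" and f: "f \<in> regfun X"
  shows "P f x = 0"
proof -
  define q where "q = (\<lambda>z. zero_outside X (\<lambda>_. 1) z - w z)"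
  have "q \<in> regfun X"
    unfolding q_def by (rule regfun_diff[OF zero_outside_in_regfun[OF pf_const] w(1)])
  moreover have "q x = 0"
    using x w(2) by (simp add: q_def zero_outside_def)
  ultimately have q: "q \<in> regfun X" "q x = 0" .
  have shift: "P h x = P (\<lambda>z. q z * h z) x" if h: "h \<in> regfun X" for h
  proof -
    have "h = (\<lambda>z. w z * h z + q z * h z)"
      using regfun_vanishes_outside[OF h]
      by (auto simp: q_def zero_outside_def fun_eq_iff algebra_simps)
    then have "P h = (\<lambda>z. P (\<lambda>z. w z * h z) z + P (\<lambda>z. q z * h z) z)"
      using clinear_on_add[OF diffop_clinear[OF P] regfun_mult[OF w(1) h] regfun_mult[OF q(1) h]]
      by simp
    then show ?thesis
      using kills[OF h] by simp
  qed
  have power_shift: "P f x = P (\<lambda>z. q z ^ k * f z) x" for k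
  proof (induction k)
    case 0
    then show ?case by simp
  next
    case (Suc k)
    then show ?case
      using shift[OF regfun_power_mult[OF q(1) f, of k]] by (simp add: mult.assoc)
  qed
  show ?thesis
    using power_shift[of "Suc d"] diffop_kills_power_at_zero[OF P q f] by argo
qed

section \<open>Group actions on a variety\<close>

lemma fun_act_mult:
  "fun_act G X act g (\<lambda>z. u z * v z) = (\<lambda>z. fun_act G X act g u z * fun_act G X act g v z)"
  by (auto simp: fun_act_def)

lemma fun_act_power_mult:
  "fun_act G X act g (\<lambda>z. u z ^ k * v z) = (\<lambda>z. fun_act G X act g u z ^ k * fun_act G X act g v z)"
  by (auto simp: fun_act_def)

lemma fun_act_lin:
  "fun_act G X act g (\<lambda>z. c * u z + v z) = (\<lambda>z. c * fun_act G X act g u z + fun_act G X act g v z)"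
  by (auto simp: fun_act_def)

lemma fun_act_diff:
  "fun_act G X act g (\<lambda>z. u z - v z) = (\<lambda>z. fun_act G X act g u z - fun_act G X act g v z)"
  by (auto simp: fun_act_def)

lemma fun_act_zero: "fun_act G X act g (\<lambda>z. 0) = (\<lambda>z. 0)"
  by (auto simp: fun_act_def)

lemma fun_act_sum:
  "fun_act G X act g (\<lambda>z. \<Sum>i\<in>I. u i z) = (\<lambda>z. \<Sum>i\<in>I. fun_act G X act g (u i) z)"
  by (auto simp: fun_act_def)

lemma fun_act_scale_sum:
  "fun_act G X act g (\<lambda>z. \<Sum>i\<in>I. c * u i z) = (\<lambda>z. \<Sum>i\<in>I. c * fun_act G X act g (u i) z)"
  by (auto simp: fun_act_def)

lemma fun_act_trivial:
  "u \<in> regfun X \<Longrightarrow> (\<And>z. z \<in> X \<Longrightarrow> act (inv\<^bsub>G\<^esub> g) z = z) \<Longrightarrow> fun_act G X act g u = u"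
  using regfun_vanishes_outside by (auto simp: fun_act_def fun_eq_iff)

lemma (in group) sum_carrier_translate:
  "h \<in> carrier G \<Longrightarrow> (\<Sum>g\<in>carrier G. F (h \<otimes> g)) = (\<Sum>g\<in>carrier G. F g)"
  using sum.reindex[OF inj_on_cmult, of h F] surj_const_mult[of h] by (simp add: comp_def)

locale variety_action = group G
  for G :: "('g, 'b) monoid_scheme" (structure) +
  fixes X :: "(complex^'n) set" and act :: "'g \<Rightarrow> complex^'n \<Rightarrow> complex^'n"
  assumes action: "group_action_on_variety G X act"
begin

abbreviation act_fun where "act_fun \<equiv> fun_act G X act"
abbreviation act_op where "act_op \<equiv> op_act G X act"

lemma act_morphism: "g \<in> carrier G \<Longrightarrow> morphism X (act g)"
  using action unfolding group_action_on_variety_def by blast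

lemma act_closed: "g \<in> carrier G \<Longrightarrow> x \<in> X \<Longrightarrow> act g x \<in> X"
  using act_morphism unfolding morphism_def by blast

lemma act_one: "x \<in> X \<Longrightarrow> act \<one> x = x"
  using action unfolding group_action_on_variety_def by blast

lemma act_mult: "g \<in> carrier G \<Longrightarrow> h \<in> carrier G \<Longrightarrow> x \<in> X \<Longrightarrow> act (g \<otimes> h) x = act g (act h x)"
  using action unfolding group_action_on_variety_def by blast

lemma fun_act_regfun:
  assumes g: "g \<in> carrier G" and u: "u \<in> regfun X"
  shows "act_fun g u \<in> regfun X"
proof -
  obtain p where p: "p \<in> polyfun" "u = zero_outside X p"
    using u by (auto simp: regfun_iff)
  obtain q where q: "q \<in> polyfun" "\<forall>x\<in>X. p (act (inv g) x) = q x"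
    using polyfun_comp_morphism[OF act_morphism[OF inv_closed[OF g]] p(1)] by blast
  have "act_fun g u = zero_outside X q"
    using q(2) act_closed[OF inv_closed[OF g]] by (auto simp: fun_act_def p(2) zero_outside_def)
  then show ?thesis
    using zero_outside_in_regfun[OF q(1)] by simp
qed

lemma fun_act_comp:
  assumes g: "g \<in> carrier G" and h: "h \<in> carrier G"
  shows "act_fun g (act_fun h u) = act_fun (g \<otimes> h) u"
proof -
  have "inv (g \<otimes> h) = inv h \<otimes> inv g"
    using g h by (rule inv_mult_group)
  then show ?thesis
    using act_closed[OF inv_closed[OF g]] act_mult[OF inv_closed[OF h] inv_closed[OF g]]
    by (auto simp: fun_act_def)
qed

lemma fun_act_one: "u \<in> regfun X \<Longrightarrow> act_fun \<one> u = u"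
  using act_one regfun_vanishes_outside by (auto simp: fun_act_def fun_eq_iff)

lemma fun_act_inv_cancel: "g \<in> carrier G \<Longrightarrow> u \<in> regfun X \<Longrightarrow> act_fun g (act_fun (inv g) u) = u"
  by (simp add: fun_act_comp fun_act_one)

lemma invariants_fun_act: "f \<in> invariants G X act \<Longrightarrow> g \<in> carrier G \<Longrightarrow> act_fun g f = f"
  unfolding invariants_def by blast

lemma invariants_regfun: "f \<in> invariants G X act \<Longrightarrow> f \<in> regfun X"
  unfolding invariants_def by blast

lemma op_act_clinear:
  assumes g: "g \<in> carrier G" and D: "clinear_on X D"
  shows "clinear_on X (act_op g D)"
  unfolding clinear_on_def op_act_def
proof (intro conjI ballI allI)
  fix f assume "f \<in> regfun X"
  then show "act_fun g (D (act_fun (inv g) f)) \<in> regfun X"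
    using g D by (simp add: fun_act_regfun clinear_on_regfun)
next
  fix f h c assume "f \<in> regfun X" "h \<in> regfun X"
  then show "act_fun g (D (act_fun (inv g) (\<lambda>x. c * f x + h x)))
      = (\<lambda>x. c * act_fun g (D (act_fun (inv g) f)) x + act_fun g (D (act_fun (inv g) h)) x)"
    using g D by (simp add: fun_act_lin fun_act_regfun clinear_on_lin)
qed

lemma op_act_commutator:
  assumes "g \<in> carrier G" "a \<in> regfun X"
  shows "(\<lambda>f x. act_op g D (\<lambda>y. a y * f y) x - a x * act_op g D f x)
    = act_op g (\<lambda>f x. D (\<lambda>y. act_fun (inv g) a y * f y) x - act_fun (inv g) a x * D f x)"
  using fun_act_inv_cancel[OF assms] unfolding op_act_def by (simp add: fun_act_mult fun_act_diff)

lemma diffop_op_act: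
  assumes g: "g \<in> carrier G"
  shows "diffop X d D \<Longrightarrow> diffop X d (act_op g D)"
proof (induction d arbitrary: D)
  case 0
  have "act_op g D (\<lambda>x. a x * f x) = (\<lambda>x. a x * act_op g D f x)"
    if a: "a \<in> regfun X" and f: "f \<in> regfun X" for a f
  proof -
    define a' where "a' = act_fun (inv g) a"
    have "a' \<in> regfun X" "act_fun (inv g) f \<in> regfun X"
      unfolding a'_def using fun_act_regfun[OF inv_closed[OF g]] a f by simp_all
    then have "D (\<lambda>y. a' y * act_fun (inv g) f y) = (\<lambda>y. a' y * D (act_fun (inv g) f) y)"
      using 0 by simp
    then have "act_op g (\<lambda>f x. D (\<lambda>y. a' y * f y) x - a' x * D f x) f = (\<lambda>x. 0)"
      by (simp add: op_act_def fun_act_zero)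
    then show ?thesis
      using fun_cong[OF op_act_commutator[OF g a, of D], of f] unfolding a'_def
      by (simp add: fun_eq_iff)
  qed
  then show ?case
    using 0 op_act_clinear[OF g] by simp
next
  case (Suc d)
  have "diffop X d (\<lambda>f x. act_op g D (\<lambda>y. a y * f y) x - a x * act_op g D f x)"
    if a: "a \<in> regfun X" for a
    unfolding op_act_commutator[OF g a]
    using Suc fun_act_regfun[OF inv_closed[OF g] a] by simp
  then show ?case
    using Suc.prems op_act_clinear[OF g] by simp
qed

lemma op_act_comp:
  assumes g: "g \<in> carrier G" and h: "h \<in> carrier G"
  shows "act_op h (act_op g D) = act_op (h \<otimes> g) D"
proof -
  have "inv (h \<otimes> g) = inv g \<otimes> inv h"
    using h g by (rule inv_mult_group)
  then show ?thesis
    unfolding op_act_def using g h by (simp add: fun_act_comp)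
qed

lemma diffop_below_op_act:
  assumes g: "g \<in> carrier G" and R: "diffop_below X d R"
  shows "diffop_below X d (act_op g R)"
proof (cases "d = 0")
  case True
  then have "clinear_on X R" and R0: "\<And>f. f \<in> regfun X \<Longrightarrow> R f = (\<lambda>x. 0)"
    using R unfolding diffop_below_def by simp_all
  moreover have "act_op g R f = (\<lambda>x. 0)" if "f \<in> regfun X" for f
    unfolding op_act_def using R0[OF fun_act_regfun[OF inv_closed[OF g] that]]
    by (simp add: fun_act_zero)
  ultimately show ?thesis
    using True g unfolding diffop_below_def by (simp add: op_act_clinear)
next
  case False
  then show ?thesis
    using R g unfolding diffop_below_def by (simp add: diffop_op_act)
qed

lemma invariant_op_imp_preserves_invariants:
  assumes D: "clinear_on X D" and inv_D: "invariant_op G X act D"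
  shows "preserves_invariants G X act D"
  unfolding preserves_invariants_def
proof
  fix f assume f: "f \<in> invariants G X act"
  have "act_fun g (D f) = D f" if g: "g \<in> carrier G" for g
  proof -
    have "act_fun g (D f) = act_op g D f"
      unfolding op_act_def using invariants_fun_act[OF f inv_closed[OF g]] by simp
    also have "\<dots> = D f"
      using inv_D g invariants_regfun[OF f] unfolding invariant_op_def by blast
    finally show ?thesis .
  qed
  then show "D f \<in> invariants G X act"
    unfolding invariants_def using clinear_on_regfun[OF D invariants_regfun[OF f]] by blast
qed

definition generic_point :: "complex^'n \<Rightarrow> bool" where
  "generic_point x \<longleftrightarrow> x \<in> X \<and> (\<forall>g\<in>carrier G. act g x = x \<longrightarrow> (\<forall>z\<in>X. act g z = z))"

lemma diffop_fun_act_at_generic_point: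
  assumes P: "diffop X d P" and x: "generic_point x" and g: "g \<in> carrier G"
    and w: "w \<in> regfun X" and h: "h \<in> regfun X"
    and w_vanishes: "act (inv g) x \<noteq> x \<Longrightarrow>
      \<exists>a\<in>regfun X. \<exists>b\<in>regfun X. a (act (inv g) x) = 0 \<and> w = (\<lambda>z. a z ^ Suc d * b z)"
  shows "P (act_fun g (\<lambda>z. w z * h z)) x = (if act (inv g) x = x then P (\<lambda>z. w z * h z) x else 0)"
proof (cases "act (inv g) x = x")
  case True
  then have "act (inv g) z = z" if "z \<in> X" for z
    using x g that unfolding generic_point_def by (simp add: inv_closed)
  then have "act_fun g (\<lambda>z. w z * h z) = (\<lambda>z. w z * h z)"
    by (rule fun_act_trivial[OF regfun_mult[OF w h]])
  then show ?thesis
    using True by simp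
next
  case False
  then obtain a b where a: "a \<in> regfun X" "a (act (inv g) x) = 0"
    and b: "b \<in> regfun X" and w_eq: "w = (\<lambda>z. a z ^ Suc d * b z)"
    using w_vanishes by blast
  have "(\<lambda>z. w z * h z) = (\<lambda>z. a z ^ Suc d * (b z * h z))"
    unfolding w_eq by (simp add: mult.assoc)
  then have "act_fun g (\<lambda>z. w z * h z) = (\<lambda>z. act_fun g a z ^ Suc d * act_fun g (\<lambda>z. b z * h z) z)"
    by (simp only: fun_act_power_mult)
  moreover have "act_fun g a x = 0"
    using a(2) x unfolding generic_point_def fun_act_def by simp
  ultimately show ?thesis
    using False diffop_kills_power_at_zero[OF P fun_act_regfun[OF g a(1)] _
        fun_act_regfun[OF g regfun_mult[OF b h]]]
    by simp
qed

end

locale finite_variety_action = variety_action +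
  assumes variety: "affine_variety X" and finite_carrier: "finite (carrier G)"
begin

lemma orbit_sum_invariant:
  assumes u: "u \<in> regfun X"
  shows "(\<lambda>z. \<Sum>g\<in>carrier G. act_fun g u z) \<in> invariants G X act"
proof -
  have "act_fun h (\<lambda>z. \<Sum>g\<in>carrier G. act_fun g u z) = (\<lambda>z. \<Sum>g\<in>carrier G. act_fun g u z)"
    if h: "h \<in> carrier G" for h
  proof -
    have "act_fun h (\<lambda>z. \<Sum>g\<in>carrier G. act_fun g u z) = (\<lambda>z. \<Sum>g\<in>carrier G. act_fun (h \<otimes> g) u z)"
      using h by (simp add: fun_act_sum fun_act_comp)
    also have "\<dots> = (\<lambda>z. \<Sum>g\<in>carrier G. act_fun g u z)"
      by (rule ext) (rule sum_carrier_translate[OF h])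
    finally show ?thesis .
  qed
  moreover have "(\<lambda>z. \<Sum>g\<in>carrier G. act_fun g u z) \<in> regfun X"
    using finite_carrier fun_act_regfun u by (simp add: regfun_sum)
  ultimately show ?thesis
    unfolding invariants_def by blast
qed

lemma non_generic_points_cover:
  "\<exists>\<Z>. finite \<Z> \<and> (\<forall>Z\<in>\<Z>. zariski_closed Z \<and> \<not> X \<subseteq> Z) \<and> {x \<in> X. \<not> generic_point x} \<subseteq> \<Union>\<Z>"
proof -
  define N where "N = {g \<in> carrier G. \<exists>z\<in>X. act g z \<noteq> z}"
  have "\<forall>g\<in>N. \<exists>Z. zariski_closed Z \<and> (\<forall>z\<in>X. z \<in> Z \<longleftrightarrow> act g z = z)"
    unfolding N_def using zariski_closed_fixed_points[OF act_morphism] by blast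
  from bchoice[OF this] obtain Fix where Fix:
    "\<And>g. g \<in> N \<Longrightarrow> zariski_closed (Fix g) \<and> (\<forall>z\<in>X. z \<in> Fix g \<longleftrightarrow> act g z = z)"
    by blast
  have "finite (Fix ` N)"
    using finite_carrier unfolding N_def by simp
  moreover have "zariski_closed (Fix g) \<and> \<not> X \<subseteq> Fix g" if g: "g \<in> N" for g
  proof -
    obtain z where "z \<in> X" "act g z \<noteq> z"
      using g unfolding N_def by blast
    then show ?thesis
      using Fix[OF g] by blast
  qed
  moreover have "x \<in> \<Union>(Fix ` N)" if x: "x \<in> X" and nongeneric: "\<not> generic_point x" for x
  proof -
    obtain g where g: "g \<in> carrier G" "act g x = x" "\<not> (\<forall>z\<in>X. act g z = z)"
      using x nongeneric unfolding generic_point_def by blast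
    then have "g \<in> N"
      unfolding N_def by blast
    then show ?thesis
      using Fix x g(2) by blast
  qed
  ultimately show ?thesis
    by blast
qed

lemma regfun_eq_zero_if_vanishes_at_generic_points:
  assumes h: "h \<in> regfun X" and vanish: "\<And>x. generic_point x \<Longrightarrow> h x = 0"
  shows "h = (\<lambda>x. 0)"
proof -
  obtain p where p: "p \<in> polyfun" "h = zero_outside X p"
    using h by (auto simp: regfun_iff)
  obtain \<Z> where \<Z>: "finite \<Z>" "\<forall>Z\<in>\<Z>. zariski_closed Z \<and> \<not> X \<subseteq> Z"
    and cover: "{x \<in> X. \<not> generic_point x} \<subseteq> \<Union>\<Z>"
    using non_generic_points_cover by blast
  let ?\<Z>' = "insert {x. p x = 0} \<Z>"
  have "X \<subseteq> \<Union>?\<Z>'"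
  proof
    fix x assume x: "x \<in> X"
    show "x \<in> \<Union>?\<Z>'"
    proof (cases "generic_point x")
      case True
      then have "h x = 0"
        by (rule vanish)
      then show ?thesis
        using x p(2) by (simp add: zero_outside_def)
    next
      case False
      then show ?thesis
        using cover x by blast
    qed
  qed
  moreover have "finite ?\<Z>'"
    using \<Z>(1) by simp
  moreover have "zariski_closed Z" if "Z \<in> ?\<Z>'" for Z
    using that \<Z>(2) zariski_closed_zero_set[OF p(1)] by auto
  ultimately obtain Z where "Z \<in> ?\<Z>'" "X \<subseteq> Z"
    using affine_variety_subset_Union[OF variety, of ?\<Z>'] by blast
  then have "X \<subseteq> {x. p x = 0}"
    using \<Z>(2) by blast
  then show ?thesis
    using p(2) by (auto simp: zero_outside_def fun_eq_iff)
qed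

lemma diffop_killing_invariants_kills_multiples:
  assumes P: "diffop X d P" and kills: "\<And>f. f \<in> invariants G X act \<Longrightarrow> P f = (\<lambda>x. 0)"
    and x: "generic_point x" and w: "w \<in> regfun X"
    and w_vanishes: "\<And>g. g \<in> carrier G \<Longrightarrow> act (inv g) x \<noteq> x \<Longrightarrow>
      \<exists>a\<in>regfun X. \<exists>b\<in>regfun X. a (act (inv g) x) = 0 \<and> w = (\<lambda>z. a z ^ Suc d * b z)"
    and h: "h \<in> regfun X"
  shows "P (\<lambda>z. w z * h z) x = 0"
proof -
  define u where "u = (\<lambda>z. w z * h z)"
  define S where "S = {g \<in> carrier G. act (inv g) x = x}"
  have u: "u \<in> regfun X"
    unfolding u_def using regfun_mult[OF w h] .
  have orbit_term: "P (act_fun g u) x = (if g \<in> S then P u x else 0)" if g: "g \<in> carrier G" for g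
    using diffop_fun_act_at_generic_point[OF P x g w h w_vanishes[OF g]] g
    unfolding S_def u_def by simp
  have "carrier G \<inter> S = S"
    unfolding S_def by blast
  have "(\<Sum>g\<in>carrier G. P (act_fun g u) x) = (\<Sum>g\<in>carrier G. if g \<in> S then P u x else 0)"
    by (rule sum.cong) (simp_all add: orbit_term)
  also have "\<dots> = of_nat (card S) * P u x"
    using finite_carrier \<open>carrier G \<inter> S = S\<close> by (simp add: sum.If_cases)
  finally have "(\<Sum>g\<in>carrier G. P (act_fun g u) x) = of_nat (card S) * P u x" .
  moreover have "(\<Sum>g\<in>carrier G. P (act_fun g u) x) = 0"
    using kills[OF orbit_sum_invariant[OF u]] fun_act_regfun u
      clinear_on_sum[OF diffop_clinear[OF P] finite_carrier, of "\<lambda>g. act_fun g u"]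
    by (simp add: fun_eq_iff)
  moreover have "\<one> \<in> S"
    using x unfolding S_def generic_point_def by (simp add: act_one)
  then have "card S \<noteq> 0"
    using finite_carrier unfolding S_def by auto
  ultimately show ?thesis
    unfolding u_def by simp
qed

lemma diffop_killing_invariants_vanishes_at_generic_point:
  assumes P: "diffop X d P" and kills: "\<And>f. f \<in> invariants G X act \<Longrightarrow> P f = (\<lambda>x. 0)"
    and x: "generic_point x" and f: "f \<in> regfun X"
  shows "P f x = 0"
proof -
  define Y where "Y = (\<lambda>g. act (inv g) x) ` carrier G - {x}"
  have "x \<in> X"
    using x unfolding generic_point_def by blast
  moreover have "finite Y" "Y \<subseteq> X" "x \<notin> Y"
    unfolding Y_def using finite_carrier act_closed[OF inv_closed] \<open>x \<in> X\<close> by auto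
  ultimately obtain w where w: "w \<in> regfun X" "w x = 1"
    and w_vanishes: "\<forall>y\<in>Y. \<exists>a\<in>regfun X. \<exists>b\<in>regfun X. a y = 0 \<and> w = (\<lambda>z. a z ^ Suc d * b z)"
    using regfun_bump[of x X Y "Suc d"] by blast
  have "P (\<lambda>z. w z * h z) x = 0" if h: "h \<in> regfun X" for h
  proof (rule diffop_killing_invariants_kills_multiples[OF P kills x w(1) _ h])
    fix g assume "g \<in> carrier G" "act (inv g) x \<noteq> x"
    then have "act (inv g) x \<in> Y"
      unfolding Y_def by blast
    then show "\<exists>a\<in>regfun X. \<exists>b\<in>regfun X. a (act (inv g) x) = 0 \<and> w = (\<lambda>z. a z ^ Suc d * b z)"
      using w_vanishes by blast
  qed
  then show ?thesis
    by (rule diffop_vanishes_at_if_kills_multiples[OF P \<open>x \<in> X\<close> w _ f])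
qed

lemma diffop_killing_invariants_eq_zero:
  assumes P: "diffop X d P" and kills: "\<And>f. f \<in> invariants G X act \<Longrightarrow> P f = (\<lambda>x. 0)"
    and f: "f \<in> regfun X"
  shows "P f = (\<lambda>x. 0)"
proof (rule regfun_eq_zero_if_vanishes_at_generic_points)
  show "P f \<in> regfun X"
    by (rule clinear_on_regfun[OF diffop_clinear[OF P] f])
  show "P f x = 0" if "generic_point x" for x
    by (rule diffop_killing_invariants_vanishes_at_generic_point[OF P kills that f])
qed

lemma preserves_invariants_imp_invariant_op:
  assumes D: "diffop X d D" and pres: "preserves_invariants G X act D"
  shows "invariant_op G X act D"
  unfolding invariant_op_def
proof (intro ballI)
  fix g f assume g: "g \<in> carrier G" and f: "f \<in> regfun X"
  have "op_diff (act_op g D) D h = (\<lambda>x. 0)" if h: "h \<in> invariants G X act" for h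
  proof -
    have "D h \<in> invariants G X act"
      using pres h unfolding preserves_invariants_def by blast
    then have "act_op g D h = D h"
      unfolding op_act_def using invariants_fun_act[OF h inv_closed[OF g]] invariants_fun_act g
      by simp
    then show ?thesis
      by (simp add: op_diff_def)
  qed
  then have "op_diff (act_op g D) D f = (\<lambda>x. 0)"
    by (rule diffop_killing_invariants_eq_zero[OF diffop_op_diff[OF diffop_op_act[OF g D] D] _ f])
  then show "act_op g D f = D f"
    by (simp add: op_diff_def fun_eq_iff)
qed

lemma preserves_invariants_iff_invariant_op:
  assumes D: "diffop X d D"
  shows "preserves_invariants G X act D \<longleftrightarrow> invariant_op G X act D"
  using preserves_invariants_imp_invariant_op[OF D]
    invariant_op_imp_preserves_invariants[OF diffop_clinear[OF D]]
  by blast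

definition average_op where
  "average_op D = (\<lambda>f x. \<Sum>g\<in>carrier G. (1 / of_nat (card (carrier G))) * act_op g D f x)"

lemma diffop_average_op: "diffop X d D \<Longrightarrow> diffop X d (average_op D)"
  unfolding average_op_def by (rule diffop_lincomb[OF finite_carrier diffop_op_act])

lemma op_act_average_op:
  assumes h: "h \<in> carrier G"
  shows "act_op h (average_op D) = average_op D"
proof -
  let ?c = "1 / of_nat (card (carrier G)) :: complex"
  have "act_op h (average_op D) = (\<lambda>f x. \<Sum>g\<in>carrier G. ?c * act_op h (act_op g D) f x)"
    by (simp only: average_op_def op_act_def[of _ _ _ h] fun_act_scale_sum)
  also have "\<dots> = (\<lambda>f x. \<Sum>g\<in>carrier G. ?c * act_op (h \<otimes> g) D f x)"
    using h by (simp add: op_act_comp)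
  also have "\<dots> = average_op D"
    unfolding average_op_def by (intro ext) (rule sum_carrier_translate[OF h])
  finally show ?thesis .
qed

lemma invariant_op_average_op: "invariant_op G X act (average_op D)"
  unfolding invariant_op_def using op_act_average_op by simp

lemma diffop_below_op_diff_average_op:
  assumes "\<And>g. g \<in> carrier G \<Longrightarrow> diffop_below X d (op_diff (act_op g D) D)"
  shows "diffop_below X d (op_diff D (average_op D))"
proof -
  define n where "n = (of_nat (card (carrier G)) :: complex)"
  have "n \<noteq> 0"
    using finite_carrier one_closed by (auto simp: n_def)
  have "op_diff D (average_op D) f x = (\<Sum>g\<in>carrier G. (- 1 / n) * op_diff (act_op g D) D f x)"
    for f x
  proof -
    have "(\<Sum>g\<in>carrier G. (- 1 / n) * op_diff (act_op g D) D f x)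
        = (\<Sum>g\<in>carrier G. (1 / n) * D f x - (1 / n) * act_op g D f x)"
      by (intro sum.cong refl) (simp add: op_diff_def algebra_simps)
    also have "\<dots> = n * ((1 / n) * D f x) - (\<Sum>g\<in>carrier G. (1 / n) * act_op g D f x)"
      by (simp add: sum_subtractf n_def)
    also have "\<dots> = D f x - (\<Sum>g\<in>carrier G. (1 / n) * act_op g D f x)"
      using \<open>n \<noteq> 0\<close> by simp
    finally show ?thesis
      by (simp add: op_diff_def average_op_def n_def)
  qed
  then have
    "op_diff D (average_op D) = (\<lambda>f x. \<Sum>g\<in>carrier G. (- 1 / n) * op_diff (act_op g D) D f x)"
    by (intro ext)
  then show ?thesis
    using diffop_below_lincomb[OF finite_carrier assms] by presburger
qed

lemma symbol_preserving_iff_symbol_invariant: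
  assumes D: "diffop X d D"
  shows "(\<exists>E. diffop X d E \<and> preserves_invariants G X act E \<and> diffop_below X d (op_diff D E))
    \<longleftrightarrow> (\<forall>g\<in>carrier G. diffop_below X d (op_diff (act_op g D) D))"
proof
  assume "\<exists>E. diffop X d E \<and> preserves_invariants G X act E \<and> diffop_below X d (op_diff D E)"
  then obtain E where E: "diffop X d E" "preserves_invariants G X act E"
    and R: "diffop_below X d (op_diff D E)"
    by blast
  have inv_E: "invariant_op G X act E"
    using preserves_invariants_imp_invariant_op[OF E] .
  show "\<forall>g\<in>carrier G. diffop_below X d (op_diff (act_op g D) D)"
  proof
    fix g assume g: "g \<in> carrier G"
    have "diffop_below X d (op_diff (act_op g (op_diff D E)) (op_diff D E))
        = diffop_below X d (op_diff (act_op g D) D)"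
    proof (rule diffop_below_cong)
      fix f assume f: "f \<in> regfun X"
      have "act_op g E f = E f"
        using inv_E g f unfolding invariant_op_def by blast
      then show "op_diff (act_op g (op_diff D E)) (op_diff D E) f = op_diff (act_op g D) D f"
        unfolding op_diff_def op_act_def[of _ _ _ g] fun_act_diff by (simp add: op_act_def)
    qed
    then show "diffop_below X d (op_diff (act_op g D) D)"
      using diffop_below_op_diff[OF diffop_below_op_act[OF g R] R] by simp
  qed
next
  assume symbol: "\<forall>g\<in>carrier G. diffop_below X d (op_diff (act_op g D) D)"
  show "\<exists>E. diffop X d E \<and> preserves_invariants G X act E \<and> diffop_below X d (op_diff D E)"
  proof (intro exI conjI)
    show "diffop X d (average_op D)"
      by (rule diffop_average_op[OF D])
    then show "preserves_invariants G X act (average_op D)"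
      by (rule invariant_op_imp_preserves_invariants[OF diffop_clinear invariant_op_average_op])
    show "diffop_below X d (op_diff D (average_op D))"
      using symbol by (intro diffop_below_op_diff_average_op) blast
  qed
qed

end

theorem theorem3p1:
  fixes G :: "('g, 'b) monoid_scheme"
    and X :: "(complex^'n) set"
    and act :: "'g \<Rightarrow> complex^'n \<Rightarrow> complex^'n"
  assumes "affine_variety X"
    and "group_action_on_variety G X act"
    and "finite (carrier G)"
  shows "(\<forall>D\<in>diffops X. preserves_invariants G X act D \<longleftrightarrow> invariant_op G X act D)
    \<and> (\<forall>d. \<forall>D. diffop X d D \<longrightarrow>
         ((\<exists>E. diffop X d E \<and> preserves_invariants G X act E \<and> diffop_below X d (op_diff D E))
          \<longleftrightarrow> (\<forall>g\<in>carrier G. diffop_below X d (op_diff (op_act G X act g D) D))))"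
proof -
  interpret finite_variety_action G X act
  proof (intro finite_variety_action.intro variety_action.intro finite_variety_action_axioms.intro)
    show "group G"
      using assms(2) unfolding group_action_on_variety_def by blast
  qed (use assms in \<open>simp_all add: variety_action_axioms_def\<close>)
  show ?thesis
  proof (intro conjI ballI allI impI)
    fix D assume "D \<in> diffops X"
    then obtain d where "diffop X d D"
      unfolding diffops_def by blast
    then show "preserves_invariants G X act D \<longleftrightarrow> invariant_op G X act D"
      by (rule preserves_invariants_iff_invariant_op)
  next
    fix d D assume "diffop X d D"
    then show "(\<exists>E. diffop X d E \<and> preserves_invariants G X act E \<and> diffop_below X d (op_diff D E))
      \<longleftrightarrow> (\<forall>g\<in>carrier G. diffop_below X d (op_diff (op_act G X act g D) D))"
      by (rule symbol_preserving_iff_symbol_invariant)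
  qed
qed

end
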